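(* For every $\varepsilon\in(0,1)$ and $\ell\in\mathbb{N}$ there is $d_0=d_0(\varepsilon,\ell)$ such that for every $m\in\mathbb{N}$ and every time series $x\in\mathbb{R}^m$ there exists a time series $y\in\mathbb{R}^{d_0}$ such that for every $z\in\mathbb{R}^\ell$, \[(1-\varepsilon)\,d_{dF}(x,z)\le d_{dF}(y,z)\le(1+\varepsilon)\,d_{dF}(x,z).\]
   Context: A time series of complexity $m$ is a vector $x=(x_1,\dots,x_m)\in\mathbb{R}^m$. For $x\in\mathbb{R}^m$ and $y\in\mathbb{R}^\ell$, a traversal is a sequence of index pairs $(i,j)\in[m]\times[\ell]$ starting at $(1,1)$, ending at $(m,\ell)$, in which each pair $(i,j)$ is followed by one of $(i,j+1)$, $(i+1,j)$, $(i+1,j+1)$. The discrete Fréchet distance $d_{dF}(x,y)$ is the minimum over all traversals $T$ of $\max_{(i,j)\in T}|x_i-y_j|$. *)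

theory Defs
  imports Complex_Main
begin

text \<open>Time series of complexity m are real lists of length m, indexed 0..m-1
  (the paper's index i corresponds to list position i-1).\<close>

definition traversal :: "nat \<Rightarrow> nat \<Rightarrow> (nat \<times> nat) list \<Rightarrow> bool" where
  "traversal m l T \<longleftrightarrow>
     T \<noteq> [] \<and> hd T = (0, 0) \<and> last T = (m - 1, l - 1) \<and>
     (\<forall>k. Suc k < length T \<longrightarrow>
        (let (i, j) = T ! k in
          T ! Suc k \<in> {(i, Suc j), (Suc i, j), (Suc i, Suc j)}))"

definition trav_cost :: "real list \<Rightarrow> real list \<Rightarrow> (nat \<times> nat) list \<Rightarrow> real" where
  "trav_cost x y T = Max ((\<lambda>(i, j). \<bar>x ! i - y ! j\<bar>) ` set T)"

definition ddF :: "real list \<Rightarrow> real list \<Rightarrow> real" where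
  "ddF x y = Min {trav_cost x y T | T. traversal (length x) (length y) T}"

end

theory Submission
  imports Defs
begin

(* The sketch y is obtained from x in two steps.
   Quantization: among the traversals of x against l columns pick one, T, minimising the spread D
   of the x-values matched to a common column. For every z of length l an optimal traversal has
   spread at most 2 ddF(x, z), so D <= 2 ddF(x, z) for all such z at once. Rounding each x_i onto a
   grid of mesh D / n around a representative of its column of T moves it by at most D / n, hence
   moves every ddF(x, z) by at most 2 ddF(x, z) / n, and leaves at most l (2n + 1) distinct values.
   Compression: whether ddF(x, z) <= r is decided by an automaton that reads x letter by letter and
   keeps the set of reachable columns of z. Over an alphabet of K letters only 2^(2^(K l) l) tables
   of such states exist, so by pigeonhole on prefixes x can be cut to at most that length without
   changing any ddF(x, z), and repeating the last letter pads it to exactly that length.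
   Taking n = ceiling (2 / eps) proves the corollary. *)

section \<open>Traversals, reachability and the discrete Frechet distance\<close>

definition next_cells :: "nat \<times> nat \<Rightarrow> (nat \<times> nat) set" where
  "next_cells = (\<lambda>(i, j). {(i, Suc j), (Suc i, j), (Suc i, Suc j)})"

lemma traversal_iff:
  "traversal m l T \<longleftrightarrow> T \<noteq> [] \<and> hd T = (0, 0) \<and> last T = (m - 1, l - 1) \<and>
     (\<forall>k. Suc k < length T \<longrightarrow> T ! Suc k \<in> next_cells (T ! k))"
  unfolding traversal_def next_cells_def by (simp add: case_prod_beta)

lemma traversal_step:
  assumes "traversal m l T" "Suc k < length T"
  shows "fst (T ! k) \<le> fst (T ! Suc k)" "fst (T ! Suc k) \<le> Suc (fst (T ! k))"
    "snd (T ! k) \<le> snd (T ! Suc k)"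
    "fst (T ! k) + snd (T ! k) < fst (T ! Suc k) + snd (T ! Suc k)"
  using assms unfolding traversal_iff next_cells_def by (auto simp: case_prod_beta)

lemma traversal_mono:
  assumes "traversal m l T" "k \<le> k'" "k' < length T"
  shows "fst (T ! k) \<le> fst (T ! k') \<and> snd (T ! k) \<le> snd (T ! k')"
  using assms(2,3)
proof (induction k' rule: dec_induct)
  case base
  show ?case by simp
next
  case (step k')
  then show ?case using traversal_step(1,3)[OF assms(1), of k'] by auto
qed

lemma traversal_last_nth:
  "traversal m l T \<Longrightarrow> T ! (length T - 1) = (m - 1, l - 1)"
  by (auto simp: traversal_iff last_conv_nth)

lemma traversal_cell_bounds:
  assumes "traversal m l T" "(i, j) \<in> set T" "0 < m" "0 < l"
  shows "i < m \<and> j < l"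
proof -
  obtain k where k: "k < length T" "T ! k = (i, j)" using assms(2) by (auto simp: in_set_conv_nth)
  then have "k \<le> length T - 1" "length T - 1 < length T" by auto
  then show ?thesis
    using traversal_mono[OF assms(1), of k "length T - 1"] traversal_last_nth[OF assms(1)] k assms(3,4)
    by auto
qed

lemma length_traversal_less:
  assumes "traversal m l T" "0 < m" "0 < l"
  shows "length T < m + l"
proof -
  have "k \<le> fst (T ! k) + snd (T ! k)" if "k < length T" for k
    using that
  proof (induction k)
    case (Suc k)
    then show ?case using traversal_step(4)[OF assms(1) Suc.prems] by simp
  qed simp
  from this[of "length T - 1"] show ?thesis
    using traversal_last_nth[OF assms(1)] assms by (simp add: traversal_iff)
qed

lemma finite_traversals:
  assumes "0 < m" "0 < l"
  shows "finite {T. traversal m l T}"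
proof (rule finite_subset)
  show "{T. traversal m l T} \<subseteq> {T. set T \<subseteq> {..<m} \<times> {..<l} \<and> length T \<le> m + l}"
    using traversal_cell_bounds[OF _ _ assms] length_traversal_less[OF _ assms]
    by (auto simp: subset_iff less_imp_le)
  show "finite {T. set T \<subseteq> {..<m} \<times> {..<l} \<and> length T \<le> m + l}"
    by (rule finite_lists_length_le) simp
qed

lemma traversal_covers_rows:
  assumes "traversal m l T" "i < m"
  shows "\<exists>j. (i, j) \<in> set T"
proof -
  have "\<forall>i \<le> fst (T ! k). \<exists>j. (i, j) \<in> set T" if "k < length T" for k
    using that
  proof (induction k)
    case 0
    have "T ! 0 = (0, 0)" using assms(1) by (auto simp: traversal_iff hd_conv_nth)
    then show ?case using nth_mem[OF 0] by auto
  next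
    case (Suc k)
    have "i = fst (T ! Suc k)" if "i \<le> fst (T ! Suc k)" "\<not> i \<le> fst (T ! k)" for i
      using that traversal_step(2)[OF assms(1) Suc.prems] by simp
    then show ?case using Suc nth_mem[OF Suc.prems] by (metis Suc_lessD prod.collapse)
  qed
  from this[of "length T - 1"] show ?thesis
    using traversal_last_nth[OF assms(1)] assms by (simp add: traversal_iff)
qed

lemma traversal_snoc:
  assumes "traversal (Suc i) (Suc j) T" "q \<in> next_cells (i, j)"
  shows "traversal (Suc (fst q)) (Suc (snd q)) (T @ [q])"
proof -
  have "(T @ [q]) ! Suc k \<in> next_cells ((T @ [q]) ! k)" if "Suc k < Suc (length T)" for k
  proof (cases "Suc k < length T")
    case True
    then show ?thesis using assms(1) by (simp add: traversal_iff nth_append)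
  next
    case False
    then have "k = length T - 1" "Suc k = length T" using that by auto
    then show ?thesis using traversal_last_nth[OF assms(1)] assms(2) by (simp add: nth_append)
  qed
  then show ?thesis using assms(1) by (simp add: traversal_iff)
qed

lemma traversal_butlast:
  assumes "traversal m l (T @ [q])" "T \<noteq> []"
  shows "traversal (Suc (fst (last T))) (Suc (snd (last T))) T" "q \<in> next_cells (last T)"
proof -
  have "Suc (length T - 1) < length (T @ [q])" "Suc (length T - 1) = length T" using assms(2) by auto
  then have "(T @ [q]) ! length T \<in> next_cells ((T @ [q]) ! (length T - 1))"
    using assms(1) unfolding traversal_iff by metis
  then show "q \<in> next_cells (last T)" using assms(2) by (simp add: nth_append last_conv_nth)
  show "traversal (Suc (fst (last T))) (Suc (snd (last T))) T"
    using assms unfolding traversal_iff by (auto simp: nth_append) (metis Suc_lessD)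
qed

inductive reachable :: "(nat \<times> nat \<Rightarrow> bool) \<Rightarrow> nat \<times> nat \<Rightarrow> bool" for Q where
  start: "Q (0, 0) \<Longrightarrow> reachable Q (0, 0)"
| step: "reachable Q p \<Longrightarrow> q \<in> next_cells p \<Longrightarrow> Q q \<Longrightarrow> reachable Q q"

lemma reachable_iff_traversal:
  "reachable Q (i, j) \<longleftrightarrow> (\<exists>T. traversal (Suc i) (Suc j) T \<and> (\<forall>p \<in> set T. Q p))"
proof
  show "reachable Q (i, j) \<Longrightarrow> \<exists>T. traversal (Suc i) (Suc j) T \<and> (\<forall>p \<in> set T. Q p)"
  proof (induction "(i, j)" arbitrary: i j rule: reachable.induct)
    case start
    then show ?case by (intro exI[of _ "[(0, 0)]"]) (simp add: traversal_iff)
  next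
    case (step p)
    obtain T where "traversal (Suc (fst p)) (Suc (snd p)) T" "\<forall>p \<in> set T. Q p"
      using step.hyps(2)[of "fst p" "snd p"] by auto
    then show ?case
      using traversal_snoc[of "fst p" "snd p" T "(i, j)"] step.hyps(3,4)
      by (intro exI[of _ "T @ [(i, j)]"]) auto
  qed
next
  assume "\<exists>T. traversal (Suc i) (Suc j) T \<and> (\<forall>p \<in> set T. Q p)"
  then obtain T where "traversal (Suc i) (Suc j) T" "\<forall>p \<in> set T. Q p" by blast
  then show "reachable Q (i, j)"
  proof (induction T arbitrary: i j rule: rev_induct)
    case Nil
    then show ?case by (simp add: traversal_iff)
  next
    case (snoc q T)
    have q: "q = (i, j)" using snoc.prems(1) unfolding traversal_iff by simp
    show ?case
    proof (cases "T = []")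
      case True
      then show ?thesis using snoc.prems q unfolding traversal_iff by (simp add: reachable.start)
    next
      case False
      have "reachable Q (fst (last T), snd (last T))"
        using snoc.IH[OF traversal_butlast(1)[OF snoc.prems(1) False]] snoc.prems(2) by simp
      moreover have "Q q" using snoc.prems(2) by simp
      ultimately show ?thesis
        using reachable.step[OF _ traversal_butlast(2)[OF snoc.prems(1) False]] q by simp
    qed
  qed
qed

lemma reachable_True: "reachable (\<lambda>_. True) (i, j)"
proof (induction j)
  case 0
  show ?case by (induction i) (auto simp: next_cells_def intro: reachable.intros)
next
  case (Suc j)
  then show ?case by (auto simp: next_cells_def intro: reachable.step)
qed

lemma traversal_exists: "0 < m \<Longrightarrow> 0 < l \<Longrightarrow> \<exists>T. traversal m l T"
  using reachable_iff_traversal[of "\<lambda>_. True" "m - 1" "l - 1"] reachable_True by simp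

lemma ddF_le_iff:
  assumes "x \<noteq> []" "z \<noteq> []"
  shows "ddF x z \<le> r \<longleftrightarrow>
    (\<exists>T. traversal (length x) (length z) T \<and> (\<forall>(i, j) \<in> set T. \<bar>x ! i - z ! j\<bar> \<le> r))"
proof -
  let ?C = "{trav_cost x z T | T. traversal (length x) (length z) T}"
  have "finite ?C"
    using finite_traversals[of "length x" "length z"] assms by (simp add: setcompr_eq_image)
  moreover have "?C \<noteq> {}" using traversal_exists[of "length x" "length z"] assms by auto
  moreover have "trav_cost x z T \<le> r \<longleftrightarrow> (\<forall>(i, j) \<in> set T. \<bar>x ! i - z ! j\<bar> \<le> r)"
    if "traversal (length x) (length z) T" for T
    using that unfolding trav_cost_def traversal_iff by (auto simp: Max_le_iff)
  ultimately show ?thesis unfolding ddF_def by (auto simp: Min_le_iff)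
qed

lemma ddF_nonneg: "x \<noteq> [] \<Longrightarrow> z \<noteq> [] \<Longrightarrow> 0 \<le> ddF x z"
  using ddF_le_iff[of x z "ddF x z"] by (fastforce simp: traversal_iff neq_Nil_conv)

lemma ddF_le_iff_reachable:
  assumes "x \<noteq> []" "z \<noteq> []"
  shows "ddF x z \<le> r \<longleftrightarrow>
    reachable (\<lambda>(i, j). \<bar>x ! i - z ! j\<bar> \<le> r) (length x - 1, length z - 1)"
  using ddF_le_iff[OF assms] reachable_iff_traversal assms by simp

section \<open>Quantization\<close>

lemma ddF_perturb:
  assumes "x \<noteq> []" "z \<noteq> []" "length x' = length x"
    and "\<And>i. i < length x \<Longrightarrow> \<bar>x' ! i - x ! i\<bar> \<le> \<eta>"
  shows "\<bar>ddF x' z - ddF x z\<bar> \<le> \<eta>"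
proof -
  have "ddF b z \<le> ddF a z + \<eta>"
    if ab: "a \<noteq> []" "length b = length a"
      and near: "\<And>i. i < length a \<Longrightarrow> \<bar>b ! i - a ! i\<bar> \<le> \<eta>" for a b
  proof -
    obtain T where T: "traversal (length a) (length z) T" "\<forall>(i, j) \<in> set T. \<bar>a ! i - z ! j\<bar> \<le> ddF a z"
      using ddF_le_iff[OF ab(1) assms(2)] by blast
    have "\<bar>b ! i - z ! j\<bar> \<le> ddF a z + \<eta>" if "(i, j) \<in> set T" for i j
    proof -
      have "i < length a" using traversal_cell_bounds[OF T(1) that] ab(1) assms(2) by simp
      then have "\<bar>b ! i - a ! i\<bar> \<le> \<eta>" by (rule near)
      moreover have "\<bar>a ! i - z ! j\<bar> \<le> ddF a z" using T(2) that by auto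
      ultimately show ?thesis by linarith
    qed
    moreover have "b \<noteq> []" using ab(1,2) by auto
    ultimately show ?thesis
      unfolding ddF_le_iff[OF \<open>b \<noteq> []\<close> assms(2)] using T(1) ab(2) by (intro exI[of _ T]) auto
  qed
  from this[of x x'] this[of x' x] show ?thesis
    using assms by (force simp: abs_minus_commute)
qed

definition column_spread :: "real list \<Rightarrow> (nat \<times> nat) list \<Rightarrow> real" where
  "column_spread x T = Max {\<bar>x ! i - x ! i'\<bar> | i i' j. (i, j) \<in> set T \<and> (i', j) \<in> set T}"

lemma finite_column_spread_set:
  "finite {\<bar>x ! i - x ! i'\<bar> | i i' j. (i, j) \<in> set T \<and> (i', j) \<in> set T}"
  by (rule finite_subset[of _ "(\<lambda>(p, q). \<bar>x ! fst p - x ! fst q\<bar>) ` (set T \<times> set T)"]) force+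

lemma column_spread_ge:
  assumes "(i, j) \<in> set T" "(i', j) \<in> set T"
  shows "\<bar>x ! i - x ! i'\<bar> \<le> column_spread x T"
  unfolding column_spread_def using assms by (intro Max_ge finite_column_spread_set) blast

lemma column_spread_le:
  assumes "T \<noteq> []" "\<forall>(i, j) \<in> set T. \<bar>x ! i - z ! j\<bar> \<le> r"
  shows "column_spread x T \<le> 2 * r"
proof -
  have "\<bar>x ! i - x ! i'\<bar> \<le> 2 * r" if "(i, j) \<in> set T" "(i', j) \<in> set T" for i i' j
  proof -
    have "\<bar>x ! i - z ! j\<bar> \<le> r" "\<bar>x ! i' - z ! j\<bar> \<le> r" using assms(2) that by auto
    then show ?thesis by linarith
  qed
  moreover obtain i j where "(i, j) \<in> set T" using assms(1) by (cases T) auto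
  then have "{\<bar>x ! i - x ! i'\<bar> | i i' j. (i, j) \<in> set T \<and> (i', j) \<in> set T} \<noteq> {}" by blast
  ultimately show ?thesis
    unfolding column_spread_def by (subst Max_le_iff[OF finite_column_spread_set]) blast+
qed

lemma ddF_common_anchors:
  assumes "x \<noteq> []" "0 < l"
  obtains A D where "finite A" "card A \<le> l" "\<And>i. i < length x \<Longrightarrow> \<exists>a \<in> A. \<bar>x ! i - a\<bar> \<le> D"
    "\<And>z. length z = l \<Longrightarrow> D \<le> 2 * ddF x z"
proof -
  let ?TT = "{T. traversal (length x) l T}"
  have "finite ?TT" using finite_traversals assms by simp
  moreover have "?TT \<noteq> {}" using traversal_exists assms by simp
  ultimately obtain Ts where Ts: "traversal (length x) l Ts"
    and min: "\<And>T. traversal (length x) l T \<Longrightarrow> column_spread x Ts \<le> column_spread x T"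
    using Min_in[of "column_spread x ` ?TT"] Min_le[of "column_spread x ` ?TT"] by fastforce
  define row where "row j = (SOME i. (i, j) \<in> set Ts)" for j
  show thesis
  proof
    show "finite (((!) x \<circ> row) ` {..<l})" "card (((!) x \<circ> row) ` {..<l}) \<le> l"
      using card_image_le[of "{..<l}"] by auto
  next
    fix i assume "i < length x"
    then obtain j where j: "(i, j) \<in> set Ts" using traversal_covers_rows[OF Ts] by blast
    then have "(row j, j) \<in> set Ts" unfolding row_def by (rule someI)
    moreover have "j < l" using traversal_cell_bounds[OF Ts j] assms by auto
    ultimately show "\<exists>a \<in> ((!) x \<circ> row) ` {..<l}. \<bar>x ! i - a\<bar> \<le> column_spread x Ts"
      using column_spread_ge[OF j] by auto
  next
    fix z :: "real list" assume "length z = l"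
    then obtain T where "traversal (length x) l T" "\<forall>(i, j) \<in> set T. \<bar>x ! i - z ! j\<bar> \<le> ddF x z"
      using ddF_le_iff[of x z "ddF x z"] assms by auto
    then show "column_spread x Ts \<le> 2 * ddF x z"
      using min column_spread_le[of T] by (fastforce simp: traversal_iff)
  qed
qed

lemma round_to_grid:
  fixes x a \<eta> :: real and n :: nat
  assumes "\<bar>x - a\<bar> \<le> n * \<eta>" "0 \<le> \<eta>"
  defines "k \<equiv> \<lfloor>(x - a) / \<eta>\<rfloor>"
  shows "\<bar>x - (a + \<eta> * k)\<bar> \<le> \<eta>" and "\<bar>k\<bar> \<le> n"
proof -
  have "\<bar>x - (a + \<eta> * k)\<bar> \<le> \<eta> \<and> \<bar>k\<bar> \<le> n"
  proof (cases "\<eta> = 0")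
    case True
    then show ?thesis using assms by (simp add: k_def)
  next
    case False
    then have \<eta>: "0 < \<eta>" using assms(2) by simp
    define t where "t = (x - a) / \<eta>"
    have k: "k = \<lfloor>t\<rfloor>" by (simp add: k_def t_def)
    have "x - a = \<eta> * t" using \<eta> by (simp add: t_def)
    then have "x - (a + \<eta> * k) = \<eta> * (t - k)" by (simp add: right_diff_distrib)
    moreover have "0 \<le> t - k" "t - k \<le> 1" unfolding k by linarith+
    moreover have "\<bar>t\<bar> \<le> n" using assms(1) \<eta> by (simp add: t_def abs_divide divide_le_eq)
    then have "\<lfloor>t\<rfloor> \<le> int n" "- int n \<le> \<lfloor>t\<rfloor>" by (simp_all add: abs_le_iff le_floor_iff floor_le_iff)
    then have "\<bar>k\<bar> \<le> n" unfolding k by linarith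
    ultimately show ?thesis
      using \<eta> by (simp add: abs_mult)
  qed
  then show "\<bar>x - (a + \<eta> * k)\<bar> \<le> \<eta>" "\<bar>k\<bar> \<le> n" by auto
qed

lemma quantize_near_anchors:
  fixes x :: "real list" and n :: nat
  assumes "finite A" "0 < n" "0 \<le> d" "\<And>i. i < length x \<Longrightarrow> \<exists>a \<in> A. \<bar>x ! i - a\<bar> \<le> d"
  obtains x' where "length x' = length x" "card (set x') \<le> card A * (2 * n + 1)"
    "\<And>i. i < length x \<Longrightarrow> \<bar>x' ! i - x ! i\<bar> \<le> d / n"
proof -
  obtain anchor where anchor: "\<And>i. i < length x \<Longrightarrow> anchor i \<in> A \<and> \<bar>x ! i - anchor i\<bar> \<le> d"
    using assms(4) by metis
  define \<eta> where "\<eta> = d / n"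
  define k where "k i = \<lfloor>(x ! i - anchor i) / \<eta>\<rfloor>" for i
  define x' where "x' = map (\<lambda>i. anchor i + \<eta> * k i) [0..<length x]"
  have "\<bar>x ! i - anchor i\<bar> \<le> n * \<eta>" if "i < length x" for i
    using anchor[OF that] assms(2) by (simp add: \<eta>_def)
  moreover have "0 \<le> \<eta>" using assms(3) by (simp add: \<eta>_def)
  ultimately have round: "\<bar>x ! i - (anchor i + \<eta> * k i)\<bar> \<le> \<eta>" "\<bar>k i\<bar> \<le> n"
    if "i < length x" for i
    using round_to_grid that unfolding k_def by blast+
  have "set x' \<subseteq> (\<lambda>(a, k). a + \<eta> * of_int k) ` (A \<times> {-int n..int n})"
    using anchor round(2) by (force simp: x'_def abs_le_iff)
  then have "card (set x') \<le> card (A \<times> {-int n..int n})"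
    using assms(1) by (meson card_image_le card_mono finite_SigmaI finite_atLeastAtMost_int
        finite_imageI order_trans)
  also have "\<dots> = card A * (2 * n + 1)" by (simp add: card_cartesian_product nat_add_distrib nat_mult_distrib)
  finally show thesis
    using that[of x'] round(1) by (simp add: x'_def \<eta>_def abs_minus_commute)
qed

lemma ddF_quantization:
  assumes "x \<noteq> []" "0 < l" "0 < n"
  obtains x' where "x' \<noteq> []" "card (set x') \<le> l * (2 * n + 1)"
    "\<And>z. length z = l \<Longrightarrow> \<bar>ddF x' z - ddF x z\<bar> \<le> 2 * ddF x z / n"
proof -
  obtain A D where A: "finite A" "card A \<le> l"
    and near: "\<And>i. i < length x \<Longrightarrow> \<exists>a \<in> A. \<bar>x ! i - a\<bar> \<le> D"
    and D: "\<And>z. length z = l \<Longrightarrow> D \<le> 2 * ddF x z"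
    using ddF_common_anchors[OF assms(1,2)] by blast
  have "0 \<le> D" using near[of 0] assms(1) by force
  then obtain x' where x': "length x' = length x" "card (set x') \<le> card A * (2 * n + 1)"
    "\<And>i. i < length x \<Longrightarrow> \<bar>x' ! i - x ! i\<bar> \<le> D / n"
    using quantize_near_anchors[OF A(1) assms(3) _ near] by blast
  show thesis
  proof
    show "x' \<noteq> []" using x'(1) assms(1) by auto
    show "card (set x') \<le> l * (2 * n + 1)" using x'(2) A(2) by (meson mult_le_mono1 order_trans)
  next
    fix z :: "real list" assume z: "length z = l"
    then have "\<bar>ddF x' z - ddF x z\<bar> \<le> D / n"
      using ddF_perturb[OF assms(1) _ x'(1) x'(3)] assms(2) by auto
    also have "\<dots> \<le> 2 * ddF x z / n" using D[OF z] by (simp add: divide_right_mono)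
    finally show "\<bar>ddF x' z - ddF x z\<bar> \<le> 2 * ddF x z / n" .
  qed
qed

section \<open>The frontier automaton\<close>

text \<open>\<open>frontier l P u\<close> is the set of columns \<open>j < l\<close> such that the cell \<open>(length u - 1, j)\<close> is
  reachable through cells \<open>(i, t)\<close> with \<open>P (u ! i) t\<close> (lemma \<open>reachable_iff_frontier\<close>),
  computed by reading \<open>u\<close> one letter at a time.\<close>

definition frontier_init :: "nat \<Rightarrow> ('a \<Rightarrow> nat \<Rightarrow> bool) \<Rightarrow> 'a \<Rightarrow> nat set" where
  "frontier_init l P c = {j. j < l \<and> (\<forall>t \<le> j. P c t)}"

definition frontier_step :: "nat \<Rightarrow> ('a \<Rightarrow> nat \<Rightarrow> bool) \<Rightarrow> nat set \<Rightarrow> 'a \<Rightarrow> nat set" where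
  "frontier_step l P S c = {j. j < l \<and> (\<exists>p \<in> S \<union> Suc ` S. p \<le> j \<and> (\<forall>t \<in> {p..j}. P c t))}"

fun frontier :: "nat \<Rightarrow> ('a \<Rightarrow> nat \<Rightarrow> bool) \<Rightarrow> 'a list \<Rightarrow> nat set" where
  "frontier l P [] = {}"
| "frontier l P (c # cs) = fold (\<lambda>c S. frontier_step l P S c) cs (frontier_init l P c)"

lemma frontier_append:
  "u \<noteq> [] \<Longrightarrow> frontier l P (u @ v) = fold (\<lambda>c S. frontier_step l P S c) v (frontier l P u)"
  by (cases u) auto

lemma frontier_snoc:
  "frontier l P (u @ [c]) =
     (if u = [] then frontier_init l P c else frontier_step l P (frontier l P u) c)"
  by (simp add: frontier_append)

lemma frontier_take_Suc:
  assumes "i < length u"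
  shows "frontier l P (take (Suc i) u) =
    (if i = 0 then frontier_init l P (u ! 0) else frontier_step l P (frontier l P (take i u)) (u ! i))"
  unfolding take_Suc_conv_app_nth[OF assms] frontier_snoc using assms by auto

lemma frontier_subset: "frontier l P u \<subseteq> {..<l}"
  by (cases u rule: rev_cases) (auto simp: frontier_snoc frontier_init_def frontier_step_def)

lemma frontier_cong:
  assumes "\<And>c t. c \<in> set u \<Longrightarrow> t < l \<Longrightarrow> P c t = Q c t"
  shows "frontier l P u = frontier l Q u"
  using assms
proof (induction u rule: rev_induct)
  case (snoc c u)
  have "P c t = Q c t" if "t < l" for t
    using snoc.prems that by simp
  then have "frontier_step l P S c = frontier_step l Q S c" "frontier_init l P c = frontier_init l Q c"
    for S
    unfolding frontier_step_def frontier_init_def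
    by (intro Collect_cong conj_cong refl bex_cong ball_cong all_cong; auto)+
  moreover have "frontier l P u = frontier l Q u"
    by (rule snoc.IH, rule snoc.prems) auto
  ultimately show ?case by (simp add: frontier_snoc)
qed simp

lemma frontier_step_idem: "frontier_step l P (frontier_step l P S c) c = frontier_step l P S c"
proof (intro equalityI subsetI)
  fix j assume "j \<in> frontier_step l P (frontier_step l P S c) c"
  then obtain p where j: "j < l" "p \<le> j" "\<forall>t \<in> {p..j}. P c t"
    and p: "p \<in> frontier_step l P S c \<union> Suc ` frontier_step l P S c"
    unfolding frontier_step_def by blast
  from p obtain p' where p': "p' \<in> frontier_step l P S c" "p' \<le> p" "p \<le> Suc p'" by auto
  then obtain q where q: "q \<in> S \<union> Suc ` S" "q \<le> p'" "\<forall>t \<in> {q..p'}. P c t"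
    unfolding frontier_step_def by blast
  have "P c t" if "t \<in> {q..j}" for t
    using that j(3) p'(3) q(3) by (cases "t \<le> p'") auto
  then show "j \<in> frontier_step l P S c"
    using j(1,2) p'(2) q(1,2) unfolding frontier_step_def by (intro CollectI conjI bexI[of _ q]) auto
next
  fix j assume j: "j \<in> frontier_step l P S c"
  then have "j < l" "P c j" unfolding frontier_step_def by auto
  then show "j \<in> frontier_step l P (frontier_step l P S c) c"
    using j unfolding frontier_step_def[of l P "frontier_step l P S c"]
    by (intro CollectI conjI bexI[of _ j]) auto
qed

lemma frontier_step_init: "frontier_step l P (frontier_init l P c) c = frontier_init l P c"
proof (intro equalityI subsetI)
  fix j assume "j \<in> frontier_step l P (frontier_init l P c) c"
  then obtain p p' where j: "j < l" "p \<le> j" "\<forall>t \<in> {p..j}. P c t"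
    and p': "\<forall>t \<le> p'. P c t" "p \<le> Suc p'"
    unfolding frontier_step_def frontier_init_def by force
  have "P c t" if "t \<le> j" for t
    using that j(3) p'(1) p'(2) by (cases "p \<le> t") auto
  then show "j \<in> frontier_init l P c" using j(1) unfolding frontier_init_def by auto
qed (auto simp: frontier_step_def frontier_init_def)

lemma frontier_stutter: "u \<noteq> [] \<Longrightarrow> frontier l P (u @ replicate n (last u)) = frontier l P u"
proof (induction n)
  case (Suc n)
  have "frontier_step l P (frontier l P u) (last u) = frontier l P u"
    using Suc.prems
    by (cases u rule: rev_cases) (auto simp: frontier_snoc frontier_step_idem frontier_step_init)
  moreover have "u @ replicate (Suc n) (last u) = (u @ replicate n (last u)) @ [last u]"
    by (simp add: replicate_append_same)
  ultimately show ?case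
    using Suc by (simp only: frontier_snoc) simp
qed simp

lemma frontier_extend:
  assumes "j \<in> frontier l P (v @ [c])" "Suc j < l" "P c (Suc j)"
  shows "Suc j \<in> frontier l P (v @ [c])"
proof -
  have extend: "\<forall>t \<in> {p..Suc j}. P c t" if "\<forall>t \<in> {p..j}. P c t" for p
    using that assms(3) by (auto simp: le_Suc_eq)
  show ?thesis
  proof (cases "v = []")
    case True
    then show ?thesis using assms by (auto simp: frontier_snoc frontier_init_def le_Suc_eq)
  next
    case False
    then obtain p where "p \<in> frontier l P v \<union> Suc ` frontier l P v" "p \<le> j" "\<forall>t \<in> {p..j}. P c t"
      using assms(1) by (auto simp: frontier_snoc frontier_step_def)
    then have "Suc j \<in> frontier_step l P (frontier l P v) c"
      using assms(2) extend unfolding frontier_step_def by (blast intro: le_SucI)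
    then show ?thesis using False by (simp add: frontier_snoc)
  qed
qed

lemma reachable_extend_right:
  assumes "reachable Q (i, p)" "p \<le> j" "\<And>t. p \<le> t \<Longrightarrow> t \<le> j \<Longrightarrow> Q (i, t)"
  shows "reachable Q (i, j)"
  using assms(2,3)
proof (induction j rule: dec_induct)
  case (step j)
  then show ?case by (auto intro: reachable.step simp: next_cells_def)
qed (use assms(1) in simp)

lemma reachable_iff_frontier:
  assumes "i < length u" "j < l"
  shows "reachable (\<lambda>(a, t). P (u ! a) t) (i, j) \<longleftrightarrow> j \<in> frontier l P (take (Suc i) u)"
proof
  have "snd p \<in> frontier l P (take (Suc (fst p)) u)"
    if "reachable (\<lambda>(a, t). P (u ! a) t) p" "fst p < length u" "snd p < l" for p
    using that
  proof (induction p rule: reachable.induct)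
    case start
    then show ?case by (simp add: frontier_take_Suc frontier_init_def)
  next
    case (step p q)
    from step.hyps(2) consider "q = (fst p, Suc (snd p))" | "q = (Suc (fst p), snd p)"
      | "q = (Suc (fst p), Suc (snd p))"
      by (auto simp: next_cells_def case_prod_beta)
    then show ?case
    proof cases
      case 1
      then show ?thesis
        using step frontier_extend[of "snd p" l P "take (fst p) u" "u ! fst p"]
        by (auto simp: take_Suc_conv_app_nth)
    next
      case 2
      then show ?thesis
        using step by (auto simp: frontier_take_Suc frontier_step_def)
    next
      case 3
      then show ?thesis
        using step by (force simp: frontier_take_Suc frontier_step_def)
    qed
  qed
  then show "reachable (\<lambda>(a, t). P (u ! a) t) (i, j) \<Longrightarrow> j \<in> frontier l P (take (Suc i) u)"
    using assms by force
next
  show "j \<in> frontier l P (take (Suc i) u) \<Longrightarrow> reachable (\<lambda>(a, t). P (u ! a) t) (i, j)"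
    using assms
  proof (induction i arbitrary: j)
    case 0
    then show ?case
      using reachable_extend_right[OF reachable.start, of "\<lambda>(a, t). P (u ! a) t" j]
      by (simp add: frontier_take_Suc frontier_init_def)
  next
    case (Suc i)
    let ?F = "frontier l P (take (Suc i) u)"
    obtain p where p: "p \<in> ?F \<union> Suc ` ?F" "p \<le> j" "\<forall>t \<in> {p..j}. P (u ! Suc i) t"
      using Suc.prems by (auto simp: frontier_take_Suc[OF Suc.prems(2)] frontier_step_def)
    then obtain p' where p': "p' \<in> ?F" "(Suc i, p) \<in> next_cells (i, p')"
      by (auto simp: next_cells_def)
    have "reachable (\<lambda>(a, t). P (u ! a) t) (i, p')"
      using Suc.IH[OF p'(1)] Suc.prems(2) frontier_subset p'(1) by auto
    moreover have "(\<lambda>(a, t). P (u ! a) t) (Suc i, p)" using p(2,3) by simp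
    ultimately have "reachable (\<lambda>(a, t). P (u ! a) t) (Suc i, p)"
      by (rule reachable.step[OF _ p'(2)])
    then show ?case by (rule reachable_extend_right) (use p in auto)
  qed
qed

lemma ddF_le_iff_frontier:
  assumes "x \<noteq> []" "z \<noteq> []"
  shows "ddF x z \<le> r \<longleftrightarrow> length z - 1 \<in> frontier (length z) (\<lambda>c t. \<bar>c - z ! t\<bar> \<le> r) x"
  using ddF_le_iff_reachable[OF assms] assms
    reachable_iff_frontier[of "length x - 1" x "length z - 1" "length z" "\<lambda>c t. \<bar>c - z ! t\<bar> \<le> r"]
  by simp

section \<open>Compression\<close>

lemma short_word_of_right_congruence:
  fixes f :: "'a list \<Rightarrow> 'b"
  assumes cong: "\<And>u u' v. u \<noteq> [] \<Longrightarrow> u' \<noteq> [] \<Longrightarrow> f u = f u' \<Longrightarrow> f (u @ v) = f (u' @ v)"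
    and "finite (range f)" "x \<noteq> []"
  obtains y where "y \<noteq> []" "set y \<subseteq> set x" "length y \<le> card (range f)" "f y = f x"
proof -
  have "\<exists>y. y \<noteq> [] \<and> set y \<subseteq> set x \<and> length y \<le> card (range f) \<and> f y = f x"
    using assms(3)
  proof (induction "length x" arbitrary: x rule: less_induct)
    case less
    let ?N = "card (range f)"
    show ?case
    proof (cases "length x \<le> ?N")
      case False
      have "card ((\<lambda>k. f (take (Suc k) x)) ` {..?N}) \<le> ?N"
        using assms(2) by (intro card_mono) auto
      then have "\<not> inj_on (\<lambda>k. f (take (Suc k) x)) {..?N}"
        using card_image by force
      then obtain k k' where k: "k < k'" "k' \<le> ?N" "f (take (Suc k) x) = f (take (Suc k') x)"
        unfolding inj_on_def by (metis atMost_iff linorder_neqE_nat)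
      define x' where "x' = take (Suc k) x @ drop (Suc k') x"
      have "f x' = f (take (Suc k') x @ drop (Suc k') x)"
        unfolding x'_def using k(3) less.prems by (intro cong) auto
      moreover have "length x' < length x" "x' \<noteq> []" using k False less.prems by (auto simp: x'_def)
      moreover have "set x' \<subseteq> set x"
        using set_take_subset set_drop_subset by (fastforce simp: x'_def)
      ultimately show ?thesis using less.hyps[of x'] by fastforce
    qed (use less.prems in blast)
  qed
  then show thesis using that by blast
qed

text \<open>For words over \<open>V\<close>, only the restriction of \<open>P\<close> to \<open>V \<times> {..<l}\<close> matters, so this table
  determines the frontiers of \<open>u\<close> for all \<open>P\<close>; it has finitely many values and is a right
  congruence.\<close>

definition frontier_table :: "nat \<Rightarrow> 'a set \<Rightarrow> 'a list \<Rightarrow> (('a \<times> nat) set \<times> nat) set" where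
  "frontier_table l V u = {(B, j). B \<subseteq> V \<times> {..<l} \<and> j \<in> frontier l (\<lambda>c t. (c, t) \<in> B) u}"

lemma card_range_frontier_table:
  assumes "finite V"
  shows "finite (range (frontier_table l V))" "card (range (frontier_table l V)) \<le> 2 ^ (2 ^ (card V * l) * l)"
proof -
  have sub: "range (frontier_table l V) \<subseteq> Pow (Pow (V \<times> {..<l}) \<times> {..<l})"
    using frontier_subset unfolding frontier_table_def by blast
  moreover have "finite (Pow (Pow (V \<times> {..<l}) \<times> {..<l}))" using assms by simp
  ultimately show "finite (range (frontier_table l V))" by (rule finite_subset)
  show "card (range (frontier_table l V)) \<le> 2 ^ (2 ^ (card V * l) * l)"
    using card_mono[OF _ sub] assms by (simp add: card_Pow card_cartesian_product)
qed

lemma frontier_table_eqD: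
  assumes "frontier_table l V u = frontier_table l V u'" "B \<subseteq> V \<times> {..<l}"
  shows "frontier l (\<lambda>c t. (c, t) \<in> B) u = frontier l (\<lambda>c t. (c, t) \<in> B) u'"
  using assms unfolding frontier_table_def by (auto simp: set_eq_iff)

lemma frontier_eq_if_table_eq:
  assumes "set u \<subseteq> V" "set u' \<subseteq> V" "frontier_table l V u = frontier_table l V u'"
  shows "frontier l P u = frontier l P u'"
proof -
  define B where "B = {(c, t). c \<in> V \<and> t < l \<and> P c t}"
  have "frontier l P u = frontier l (\<lambda>c t. (c, t) \<in> B) u"
    using assms(1) by (intro frontier_cong) (auto simp: B_def)
  also have "\<dots> = frontier l (\<lambda>c t. (c, t) \<in> B) u'"
    by (rule frontier_table_eqD[OF assms(3)]) (auto simp: B_def)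
  also have "\<dots> = frontier l P u'"
    using assms(2) by (intro frontier_cong) (auto simp: B_def)
  finally show ?thesis .
qed

lemma frontier_table_append:
  assumes "u \<noteq> []" "u' \<noteq> []" "frontier_table l V u = frontier_table l V u'"
  shows "frontier_table l V (u @ v) = frontier_table l V (u' @ v)"
  using frontier_table_eqD[OF assms(3)] assms(1,2) unfolding frontier_table_def
  by (auto simp: frontier_append)

lemma frontier_compression:
  assumes "x \<noteq> []" "card (set x) \<le> K"
  obtains y where "length y = 2 ^ (2 ^ (K * l) * l)" "y \<noteq> []" "\<And>P. frontier l P y = frontier l P x"
proof -
  let ?N = "2 ^ (2 ^ (K * l) * l) :: nat"
  obtain y where y: "y \<noteq> []" "set y \<subseteq> set x" "length y \<le> card (range (frontier_table l (set x)))"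
    "frontier_table l (set x) y = frontier_table l (set x) x"
    using short_word_of_right_congruence[OF frontier_table_append card_range_frontier_table(1) assms(1)]
    by blast
  have "length y \<le> ?N"
    using y(3) card_range_frontier_table(2)[of "set x" l] assms(2)
    by (meson finite_set le_trans mult_le_mono1 one_le_numeral power_increasing)
  moreover have "frontier l P (y @ replicate (?N - length y) (last y)) = frontier l P x" for P
    using frontier_stutter[OF y(1)] frontier_eq_if_table_eq[OF y(2) _ y(4)] by simp
  ultimately show thesis using that[of "y @ replicate (?N - length y) (last y)"] y(1) by simp
qed

lemma ddF_compression:
  assumes "x \<noteq> []" "card (set x) \<le> K" "0 < l"
  obtains y where "length y = 2 ^ (2 ^ (K * l) * l)" "\<And>z. length z = l \<Longrightarrow> ddF y z = ddF x z"
proof -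
  obtain y where y: "length y = 2 ^ (2 ^ (K * l) * l)" "y \<noteq> []" "\<And>P. frontier l P y = frontier l P x"
    using frontier_compression[OF assms(1,2)] by blast
  have "ddF y z = ddF x z" if "length z = l" for z
  proof -
    have "z \<noteq> []" using that assms(3) by auto
    then have "ddF y z \<le> r \<longleftrightarrow> ddF x z \<le> r" for r
      using ddF_le_iff_frontier[OF y(2)] ddF_le_iff_frontier[OF assms(1)] y(3) that by simp
    then show ?thesis by (meson order_antisym order_refl)
  qed
  then show thesis using that y(1) by blast
qed

lemma ddF_sketch:
  assumes "x \<noteq> []" "0 < l" "0 < n"
  obtains y where "length y = 2 ^ (2 ^ (l * (2 * n + 1) * l) * l)"
    "\<And>z. length z = l \<Longrightarrow> \<bar>ddF y z - ddF x z\<bar> \<le> 2 * ddF x z / n"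
proof -
  obtain x' where x': "x' \<noteq> []" "card (set x') \<le> l * (2 * n + 1)"
    "\<And>z. length z = l \<Longrightarrow> \<bar>ddF x' z - ddF x z\<bar> \<le> 2 * ddF x z / n"
    using ddF_quantization[OF assms] by blast
  obtain y where y: "length y = 2 ^ (2 ^ (l * (2 * n + 1) * l) * l)"
    "\<And>z. length z = l \<Longrightarrow> ddF y z = ddF x' z"
    using ddF_compression[OF x'(1,2) assms(2)] by blast
  show thesis by (rule that[OF y(1)]) (simp add: x'(3) y(2))
qed

theorem corollary4p7:
  fixes \<epsilon> :: real and l :: nat
  assumes "0 < \<epsilon>" and "\<epsilon> < 1" and "1 \<le> l"
  shows "\<exists>d0 :: nat. \<forall>x :: real list. x \<noteq> [] \<longrightarrow>
           (\<exists>y :: real list. length y = d0 \<and>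
              (\<forall>z :: real list. length z = l \<longrightarrow>
                 (1 - \<epsilon>) * ddF x z \<le> ddF y z \<and> ddF y z \<le> (1 + \<epsilon>) * ddF x z))"
proof -
  define n where "n = nat \<lceil>2 / \<epsilon>\<rceil>"
  have "2 / \<epsilon> \<le> n" unfolding n_def by (rule real_nat_ceiling_ge)
  moreover have "0 < 2 / \<epsilon>" using assms(1) by simp
  ultimately have "0 < real n" "2 \<le> \<epsilon> * n"
    using pos_divide_le_eq[OF assms(1)] by (linarith, simp add: mult.commute)
  then have n: "0 < n" "2 / n \<le> \<epsilon>" by (simp_all add: pos_divide_le_eq)
  have l: "0 < l" using assms(3) by simp
  show ?thesis
  proof (rule exI, intro allI impI)
    fix x :: "real list" assume x: "x \<noteq> []"
    obtain y where y: "length y = 2 ^ (2 ^ (l * (2 * n + 1) * l) * l)"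
      "\<And>z. length z = l \<Longrightarrow> \<bar>ddF y z - ddF x z\<bar> \<le> 2 * ddF x z / n"
      using ddF_sketch[OF x l n(1)] by blast
    have "\<bar>ddF y z - ddF x z\<bar> \<le> \<epsilon> * ddF x z" if "length z = l" for z
    proof -
      have "0 \<le> ddF x z" using ddF_nonneg[OF x] that l by auto
      then have "2 * ddF x z / n \<le> \<epsilon> * ddF x z"
        using n(2) by (metis mult.commute mult_right_mono times_divide_eq_right)
      then show ?thesis using y(2)[OF that] by linarith
    qed
    then show "\<exists>y. length y = 2 ^ (2 ^ (l * (2 * n + 1) * l) * l) \<and> (\<forall>z. length z = l \<longrightarrow>
        (1 - \<epsilon>) * ddF x z \<le> ddF y z \<and> ddF y z \<le> (1 + \<epsilon>) * ddF x z)"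
      using y(1) by (auto simp: abs_le_iff algebra_simps)
  qed
qed

end
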